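(* Let $\mathbb{P}^3=\mathrm{Proj}\,\mathbb{F}_q[x,y,z,w]$ and $$g=x^qy-xy^q+z^qw-zw^q.$$ Then $V(g)\subset\mathbb{P}^3$ is a smooth, geometrically irreducible surface of degree $q+1$ with $V(g)(\mathbb{F}_q)=\mathbb{P}^3(\mathbb{F}_q)$, and $q+1$ is the minimal possible degree of a surface $V(h)$, $h\in\mathbb{F}_q[x,y,z,w]$ homogeneous and nonzero, with $V(h)(\mathbb{F}_q)=\mathbb{P}^3(\mathbb{F}_q)$.
   Context: $\mathbb{F}_q$ is the finite field of order $q=p^r$. For a projective $\mathbb{F}_q$-scheme $X$, $X(\mathbb{F}_q)$ denotes its set of $\mathbb{F}_q$-rational points. *)

theory Defs
  imports "HOL-Computational_Algebra.Polynomial" "HOL-Library.Cardinality"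
begin

text \<open>Polynomials in the four variables x, y, z, w over a ring 'a are encoded as
  iterated univariate polynomials: x is the outermost variable, w the innermost.\<close>

type_synonym 'a mpoly4 = "'a poly poly poly poly"

definition varX :: "'a::comm_ring_1 mpoly4" where "varX = [:0, 1:]"
definition varY :: "'a::comm_ring_1 mpoly4" where "varY = [:[:0, 1:]:]"
definition varZ :: "'a::comm_ring_1 mpoly4" where "varZ = [:[:[:0, 1:]:]:]"
definition varW :: "'a::comm_ring_1 mpoly4" where "varW = [:[:[:[:0, 1:]:]:]:]"

definition coeff4 :: "'a::zero mpoly4 \<Rightarrow> nat \<Rightarrow> nat \<Rightarrow> nat \<Rightarrow> nat \<Rightarrow> 'a" where
  "coeff4 g i j k l = coeff (coeff (coeff (coeff g i) j) k) l"

definition homogeneous4 :: "'a::zero mpoly4 \<Rightarrow> nat \<Rightarrow> bool" where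
  "homogeneous4 g d \<longleftrightarrow> (\<forall>i j k l. coeff4 g i j k l \<noteq> 0 \<longrightarrow> i + j + k + l = d)"

definition eval4 :: "'a::comm_semiring_0 mpoly4 \<Rightarrow> 'a \<Rightarrow> 'a \<Rightarrow> 'a \<Rightarrow> 'a \<Rightarrow> 'a" where
  "eval4 g x y z w = poly (poly (poly (poly g [:[:[:x:]:]:]) [:[:y:]:]) [:z:]) w"

definition map4 :: "('a::zero \<Rightarrow> 'b::zero) \<Rightarrow> 'a mpoly4 \<Rightarrow> 'b mpoly4" where
  "map4 f g = map_poly (map_poly (map_poly (map_poly f))) g"

definition dX4 :: "'a::{comm_semiring_1,semiring_no_zero_divisors} mpoly4 \<Rightarrow> 'a mpoly4" where
  "dX4 g = pderiv g"
definition dY4 :: "'a::{comm_semiring_1,semiring_no_zero_divisors} mpoly4 \<Rightarrow> 'a mpoly4" where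
  "dY4 g = map_poly pderiv g"
definition dZ4 :: "'a::{comm_semiring_1,semiring_no_zero_divisors} mpoly4 \<Rightarrow> 'a mpoly4" where
  "dZ4 g = map_poly (map_poly pderiv) g"
definition dW4 :: "'a::{comm_semiring_1,semiring_no_zero_divisors} mpoly4 \<Rightarrow> 'a mpoly4" where
  "dW4 g = map_poly (map_poly (map_poly pderiv)) g"

text \<open>Set of K-rational points of the projective hypersurface V(g), represented by
  their (nonzero) homogeneous coordinate vectors; P^3(K) corresponds to all nonzero vectors.\<close>
definition proj_points :: "('a::zero \<times> 'a \<times> 'a \<times> 'a) set" where
  "proj_points = UNIV - {(0, 0, 0, 0)}"

definition hyp_points :: "'a::comm_semiring_0 mpoly4 \<Rightarrow> ('a \<times> 'a \<times> 'a \<times> 'a) set" where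
  "hyp_points g = {(x, y, z, w). (x, y, z, w) \<in> proj_points \<and> eval4 g x y z w = 0}"

text \<open>Jacobian criterion: the projective hypersurface V(G) over an algebraically
  closed field has no singular point.\<close>
definition nonsingular4 :: "'a::field mpoly4 \<Rightarrow> bool" where
  "nonsingular4 G \<longleftrightarrow> (\<forall>(x, y, z, w) \<in> hyp_points G.
      \<not> (eval4 (dX4 G) x y z w = 0 \<and> eval4 (dY4 G) x y z w = 0 \<and>
         eval4 (dZ4 G) x y z w = 0 \<and> eval4 (dW4 G) x y z w = 0))"

definition field_emb :: "('a::field \<Rightarrow> 'b::field) \<Rightarrow> bool" where
  "field_emb \<phi> \<longleftrightarrow> \<phi> 1 = 1 \<and> (\<forall>a b. \<phi> (a + b) = \<phi> a + \<phi> b) \<and> (\<forall>a b. \<phi> (a * b) = \<phi> a * \<phi> b)"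

definition g_surf :: "nat \<Rightarrow> 'a::comm_ring_1 mpoly4" where
  "g_surf q = varX ^ q * varY - varX * varY ^ q + varZ ^ q * varW - varZ * varW ^ q"

end

theory Submission
  imports Defs
begin

text \<open>
  Over \<open>\<FF>\<^sub>q\<close> every element satisfies \<open>a\<^sup>q = a\<close>, so \<open>g\<close> vanishes at every point. In characteristic
  dividing \<open>q\<close> the partial derivatives of \<open>g\<close> are \<open>-y\<^sup>q, x\<^sup>q, -w\<^sup>q, z\<^sup>q\<close>, which have no common
  projective zero. Viewed as a polynomial in \<open>x\<close>, \<open>g\<close> has leading coefficient \<open>y\<close> and reduces
  modulo \<open>y\<close> to the nonzero constant \<open>z\<^sup>qw - zw\<^sup>q\<close>; this forces every factorization to be trivial.

  For minimality, a homogeneous \<open>h\<close> of degree \<open>d \<le> q\<close> vanishing on \<open>\<PP>\<^sup>3(\<FF>\<^sub>q)\<close> vanishes on all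
  of \<open>\<FF>\<^sub>q\<^sup>4\<close>. Its only monomials with an exponent \<open>\<ge> q\<close> are the pure powers \<open>x\<^sup>q, \<dots>, w\<^sup>q\<close>;
  replacing them by \<open>x, \<dots>, w\<close> gives a reduced polynomial vanishing on \<open>\<FF>\<^sub>q\<^sup>4\<close>, hence zero. As
  \<open>h\<close> cannot contain monomials of both degrees \<open>q\<close> and \<open>1\<close>, this forces \<open>h = 0\<close>.
\<close>

lemma card_field_ge_2: "2 \<le> CARD('a::{finite,field})"
proof -
  have "card {0::'a, 1} \<le> CARD('a)" by (intro card_mono) auto
  then show ?thesis by simp
qed

lemma of_nat_card_field: "of_nat CARD('a::{finite,field}) = (0 :: 'a)"
proof -
  have "(\<Sum>y\<in>UNIV. y + 1) = (\<Sum>y::'a\<in>UNIV. y)"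
    by (rule sum.reindex_bij_witness[of _ "\<lambda>y. y - 1" "\<lambda>y. y + 1"]) auto
  then show ?thesis by (simp add: sum.distrib)
qed

lemma power_card_field: "(x :: 'a::{finite,field}) ^ CARD('a) = x"
proof (cases "x = 0")
  case False
  have "x * (\<Prod>y\<in>UNIV-{0}. x * y) = x * x ^ (CARD('a) - 1) * \<Prod>(UNIV-{0})"
    by (simp add: prod.distrib mult_ac card_Diff_subset)
  also have "x * x ^ (CARD('a) - 1) = x ^ CARD('a)"
    using card_field_ge_2[where 'a='a] by (simp flip: power_Suc)
  also have "(\<Prod>y\<in>UNIV-{0}. x * y) = (\<Prod>y\<in>UNIV-{0}. y)"
    by (rule prod.reindex_bij_witness[of _ "\<lambda>y. y / x" "\<lambda>y. x * y"]) (use False in auto)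
  finally show ?thesis by simp
qed (use card_field_ge_2[where 'a='a] in simp)

lemma coeffs_eq_0_if_sum_powers_vanish:
  fixes a :: "nat \<Rightarrow> 'a::{finite,field}"
  assumes "\<And>x. (\<Sum>i<CARD('a). x ^ i * a i) = 0" and "i < CARD('a)"
  shows "a i = 0"
proof -
  define p where "p = (\<Sum>i<CARD('a). monom (a i) i)"
  have "poly p x = 0" for x using assms(1) by (simp add: p_def poly_sum poly_monom mult.commute)
  moreover have "degree p < CARD('a)"
    unfolding p_def by (rule degree_sum_less) (auto intro: le_less_trans[OF degree_monom_le])
  ultimately have "p = 0"
    using card_poly_roots_bound[of p] by (auto simp: not_le[symmetric])
  moreover have "coeff p i = a i"
    using assms(2) by (simp add: p_def coeff_sum coeff_monom)
  ultimately show ?thesis by simp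
qed

lemma coeffs_eq_0_if_sum_powers4_vanish:
  fixes c :: "nat \<Rightarrow> nat \<Rightarrow> nat \<Rightarrow> nat \<Rightarrow> 'a::{finite,field}"
  assumes vanish: "\<And>x y z w. (\<Sum>i<CARD('a). \<Sum>j<CARD('a). \<Sum>k<CARD('a). \<Sum>l<CARD('a).
                                    x ^ i * (y ^ j * (z ^ k * (w ^ l * c i j k l)))) = 0"
    and "i < CARD('a)" "j < CARD('a)" "k < CARD('a)" "l < CARD('a)"
  shows "c i j k l = 0"
proof -
  let ?q = "CARD('a)"
  have "(\<Sum>j<?q. \<Sum>k<?q. \<Sum>l<?q. y ^ j * (z ^ k * (w ^ l * c i j k l))) = 0" for y z w
    using coeffs_eq_0_if_sum_powers_vanish[OF _ \<open>i < ?q\<close>,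
        of "\<lambda>i. \<Sum>j<?q. \<Sum>k<?q. \<Sum>l<?q. y ^ j * (z ^ k * (w ^ l * c i j k l))"]
    by (simp add: vanish sum_distrib_left)
  then have "(\<Sum>k<?q. \<Sum>l<?q. z ^ k * (w ^ l * c i j k l)) = 0" for z w
    using coeffs_eq_0_if_sum_powers_vanish[OF _ \<open>j < ?q\<close>,
        of "\<lambda>j. \<Sum>k<?q. \<Sum>l<?q. z ^ k * (w ^ l * c i j k l)"]
    by (simp add: sum_distrib_left)
  then have "(\<Sum>l<?q. w ^ l * c i j k l) = 0" for w
    using coeffs_eq_0_if_sum_powers_vanish[OF _ \<open>k < ?q\<close>, of "\<lambda>k. \<Sum>l<?q. w ^ l * c i j k l"]
    by (simp add: sum_distrib_left)
  then show ?thesis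
    using coeffs_eq_0_if_sum_powers_vanish[OF _ \<open>l < ?q\<close>, of "c i j k"] by simp
qed

lemma field_emb_0: "field_emb \<phi> \<Longrightarrow> \<phi> 0 = 0"
  unfolding field_emb_def by (metis add_cancel_right_right add_0)

lemma field_emb_diff: "field_emb \<phi> \<Longrightarrow> \<phi> (a - b) = \<phi> a - \<phi> b"
  unfolding field_emb_def by (metis add_diff_cancel diff_add_cancel)

lemma field_emb_of_nat: "field_emb \<phi> \<Longrightarrow> \<phi> (of_nat n) = of_nat n"
  by (induction n) (simp_all add: field_emb_0, simp add: field_emb_def)

lemma map_poly_add_hom:
  assumes "f 0 = 0" "\<And>a b. f (a + b) = f a + f b"
  shows "map_poly f (p + r) = map_poly f p + map_poly f r"
  by (rule poly_eqI) (simp add: coeff_map_poly assms)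

lemma map_poly_diff_hom:
  assumes "f 0 = 0" "\<And>a b. f (a - b) = f a - f b"
  shows "map_poly f (p - r) = map_poly f p - map_poly f r"
  by (rule poly_eqI) (simp add: coeff_map_poly assms)

lemma of_nat_mult_monom: "(of_nat n :: 'a::comm_semiring_1 poly) * monom c k = monom (of_nat n * c) k"
  by (simp only: of_nat_poly[of n] mult_pCons_left smult_monom) simp

lemma poly_eq_sum_lessThan:
  fixes p :: "'a::comm_semiring_1 poly"
  assumes "\<And>i. N \<le> i \<Longrightarrow> coeff p i = 0"
  shows "poly p a = (\<Sum>i<N. coeff p i * a ^ i)"
proof (cases "p = 0")
  case False
  then have "degree p < N"
    using assms by (metis leading_coeff_0_iff not_le)
  then have "(\<Sum>i<N. coeff p i * a ^ i) = (\<Sum>i\<le>degree p. coeff p i * a ^ i)"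
    by (intro sum.mono_neutral_right) (auto simp: coeff_eq_0)
  then show ?thesis by (simp add: poly_altdef)
qed simp

lemma is_unit_if_dvd_x_and_coeff_0_nonzero:
  fixes a :: "'a::idom poly"
  assumes "a dvd [:0, 1:]" and "coeff a 0 \<noteq> 0"
  shows "a dvd 1"
proof -
  from assms(1) obtain b where "[:0, 1:] = a * b" ..
  then have ab: "a * b = [:0, 1:]" ..
  then have "a \<noteq> 0" "b \<noteq> 0" by auto
  then have deg: "degree a + degree b = 1"
    using ab degree_mult_eq[of a b] by simp
  have "coeff a 0 * coeff b 0 = 0"
    using arg_cong[OF ab, of "\<lambda>p. coeff p 0"] by (simp add: coeff_mult_0)
  then have "coeff b 0 = 0"
    using assms(2) by simp
  have "degree b \<noteq> 0"
  proof
    assume "degree b = 0"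
    then have "b = [:coeff b 0:]" by (simp add: degree_0_id)
    with \<open>coeff b 0 = 0\<close> \<open>b \<noteq> 0\<close> show False by simp
  qed
  then have a_const: "a = [:coeff a 0:]"
    using deg by (simp add: degree_0_id)
  have "coeff a 0 * coeff b 1 = 1"
    using arg_cong[OF ab, of "\<lambda>p. coeff p 1"] by (subst (asm) a_const) simp
  then have "coeff a 0 dvd 1"
    by (intro dvdI[of 1 _ "coeff b 1"]) simp
  then show ?thesis
    by (subst a_const) (simp add: is_unit_const_poly_iff)
qed

lemma map_poly_coeff_0_mult:
  fixes p r :: "'a::comm_semiring_1 poly poly"
  shows "map_poly (\<lambda>a. coeff a 0) (p * r) = map_poly (\<lambda>a. coeff a 0) p * map_poly (\<lambda>a. coeff a 0) r"
  by (rule poly_eqI) (simp add: coeff_map_poly coeff_mult coeff_sum coeff_mult_0)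

lemma is_unit_if_const_factor_of_lead_x:
  fixes P Q :: "'a::idom poly poly"
  assumes "degree P = 0" and "lead_coeff P * lead_coeff Q = [:0, 1:]" and "coeff (coeff P 0) 0 \<noteq> 0"
  shows "P dvd 1"
proof -
  have "coeff P 0 dvd [:0, 1:]"
    using assms(1,2) by (intro dvdI[of _ _ "lead_coeff Q"]) simp
  then have "coeff P 0 dvd 1"
    using assms(3) by (rule is_unit_if_dvd_x_and_coeff_0_nonzero)
  then show ?thesis
    using assms(1) by (subst degree_0_id[symmetric]) (simp_all add: is_unit_const_poly_iff)
qed

text \<open>
  Here \<open>G \<in> S[y][x]\<close> and \<open>map_poly (\<lambda>a. coeff a 0)\<close> is reduction modulo \<open>y\<close>. Modulo \<open>y\<close> both
  factors of \<open>G\<close> become constants in \<open>x\<close>, so a factor of positive \<open>x\<close>-degree has leading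
  coefficient divisible by \<open>y\<close>; two such factors cannot multiply to the leading coefficient \<open>y\<close>.
\<close>
lemma irreducible_if_lead_coeff_x:
  fixes G :: "'a::idom poly poly"
  assumes lead: "lead_coeff G = [:0, 1:]"
    and const: "map_poly (\<lambda>a. coeff a 0) G = [:c:]" and "c \<noteq> 0"
  shows "irreducible G"
proof (rule irreducibleI)
  let ?r = "map_poly (\<lambda>a. coeff a 0)"
  show "G \<noteq> 0"
    using lead by auto
  show "\<not> G dvd 1"
    using lead by (auto simp: is_unit_poly_iff)
  fix A B
  assume G: "G = A * B"
  have rAB: "?r A * ?r B = [:c:]"
    using const by (simp add: G map_poly_coeff_0_mult)
  then have "?r A \<noteq> 0" "?r B \<noteq> 0"
    using \<open>c \<noteq> 0\<close> by auto
  then have "degree (?r A) = 0" "degree (?r B) = 0"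
    using degree_mult_eq[of "?r A" "?r B"] rAB by simp_all
  then have rA: "?r A = [:coeff (coeff A 0) 0:]" and rB: "?r B = [:coeff (coeff B 0) 0:]"
    using degree_0_id[of "?r A"] degree_0_id[of "?r B"] by (simp_all add: coeff_map_poly)
  have A0: "coeff (coeff A 0) 0 \<noteq> 0" and B0: "coeff (coeff B 0) 0 \<noteq> 0"
    using rAB \<open>c \<noteq> 0\<close> by (auto simp: rA rB)
  have lAB: "lead_coeff A * lead_coeff B = [:0, 1:]"
    using lead by (simp add: G lead_coeff_mult)
  have lead_coeff_0: "coeff (lead_coeff P) 0 = 0"
    if "degree P \<noteq> 0" "?r P = [:coeff (coeff P 0) 0:]" for P :: "'a poly poly"
    using arg_cong[OF that(2), of "\<lambda>p. coeff p (degree P)"] that(1)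
    by (simp add: coeff_map_poly coeff_pCons split: nat.splits)
  show "A dvd 1 \<or> B dvd 1"
  proof (cases "degree A = 0 \<or> degree B = 0")
    case True
    then show ?thesis
      using is_unit_if_const_factor_of_lead_x[of A B] is_unit_if_const_factor_of_lead_x[of B A] lAB A0 B0
      by (auto simp: mult.commute)
  next
    case False
    then have "coeff (lead_coeff A * lead_coeff B) 1 = 0"
      using lead_coeff_0[OF _ rA] lead_coeff_0[OF _ rB] by (simp add: coeff_mult atMost_Suc)
    with lAB show ?thesis by simp
  qed
qed

definition monom4 :: "'a::zero \<Rightarrow> nat \<Rightarrow> nat \<Rightarrow> nat \<Rightarrow> nat \<Rightarrow> 'a mpoly4" where
  "monom4 c i j k l = monom (monom (monom (monom c l) k) j) i"

lemma mpoly4_eqI: "(\<And>i j k l. coeff4 p i j k l = coeff4 r i j k l) \<Longrightarrow> p = r"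
  unfolding coeff4_def by (intro poly_eqI) simp

lemma monom4_0 [simp]: "monom4 0 i j k l = 0"
  by (simp add: monom4_def)

lemma coeff4_0 [simp]: "coeff4 0 i j k l = 0"
  by (simp add: coeff4_def)

lemma coeff4_monom4:
  "coeff4 (monom4 c i j k l) a b e f = (if a = i \<and> b = j \<and> e = k \<and> f = l then c else 0)"
  by (simp add: coeff4_def monom4_def coeff_monom)

lemma coeff4_add: "coeff4 (p + r) i j k l = coeff4 p i j k l + coeff4 r i j k l"
  by (simp add: coeff4_def)

lemma coeff4_diff: "coeff4 (p - r) i j k l = coeff4 p i j k l - coeff4 (r :: 'a::comm_ring_1 mpoly4) i j k l"
  by (simp add: coeff4_def)

lemma coeff4_uminus: "coeff4 (- p) i j k l = - coeff4 (p :: 'a::comm_ring_1 mpoly4) i j k l"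
  by (simp add: coeff4_def)

lemma eval4_add: "eval4 (p + r) x y z w = eval4 p x y z w + eval4 r x y z w"
  by (simp add: eval4_def)

lemma eval4_diff: "eval4 (p - r) x y z w = eval4 p x y z w - eval4 (r :: 'a::comm_ring_1 mpoly4) x y z w"
  by (simp add: eval4_def)

lemma eval4_uminus: "eval4 (- p) x y z w = - eval4 (p :: 'a::comm_ring_1 mpoly4) x y z w"
  by (simp add: eval4_def)

lemma eval4_monom4:
  "eval4 (monom4 (c :: 'a::comm_semiring_1) i j k l) x y z w = c * x ^ i * y ^ j * z ^ k * w ^ l"
  by (simp add: eval4_def monom4_def poly_monom poly_const_pow mult_ac)

lemma monom4_mult:
  "monom4 (a :: 'a::comm_semiring_1) i j k l * monom4 b i' j' k' l' =
     monom4 (a * b) (i + i') (j + j') (k + k') (l + l')"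
  by (simp add: monom4_def mult_monom)

lemma monom4_power:
  "monom4 (a :: 'a::comm_semiring_1) i j k l ^ n = monom4 (a ^ n) (i * n) (j * n) (k * n) (l * n)"
  by (induction n) (simp_all add: monom4_mult, simp add: monom4_def)

lemma vars_eq_monom4:
  "varX = monom4 1 1 0 0 0" "varY = monom4 1 0 1 0 0" "varZ = monom4 1 0 0 1 0" "varW = monom4 1 0 0 0 1"
  by (simp_all add: monom4_def varX_def varY_def varZ_def varW_def monom_Suc monom_0 one_pCons)

lemma partial_derivatives_monom4:
  fixes c :: "'a::idom"
  shows "dX4 (monom4 c i j k l) = monom4 (of_nat i * c) (i - 1) j k l"
    and "dY4 (monom4 c i j k l) = monom4 (of_nat j * c) i (j - 1) k l"
    and "dZ4 (monom4 c i j k l) = monom4 (of_nat k * c) i j (k - 1) l"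
    and "dW4 (monom4 c i j k l) = monom4 (of_nat l * c) i j k (l - 1)"
  by (simp_all add: dX4_def dY4_def dZ4_def dW4_def monom4_def pderiv_monom map_poly_monom of_nat_mult_monom)

lemma partial_derivatives_add_diff:
  fixes p r :: "'a::idom mpoly4"
  shows "dX4 (p + r) = dX4 p + dX4 r" "dY4 (p + r) = dY4 p + dY4 r"
    "dZ4 (p + r) = dZ4 p + dZ4 r" "dW4 (p + r) = dW4 p + dW4 r"
    "dX4 (p - r) = dX4 p - dX4 r" "dY4 (p - r) = dY4 p - dY4 r"
    "dZ4 (p - r) = dZ4 p - dZ4 r" "dW4 (p - r) = dW4 p - dW4 r"
  by (simp_all add: dX4_def dY4_def dZ4_def dW4_def pderiv_add pderiv_diff map_poly_add_hom map_poly_diff_hom)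

lemma eval4_eq_sum_coeff4:
  fixes p :: "'a::comm_semiring_1 mpoly4"
  assumes "\<And>i j k l. N \<le> i \<or> N \<le> j \<or> N \<le> k \<or> N \<le> l \<Longrightarrow> coeff4 p i j k l = 0"
  shows "eval4 p x y z w =
           (\<Sum>i<N. \<Sum>j<N. \<Sum>k<N. \<Sum>l<N. x ^ i * (y ^ j * (z ^ k * (w ^ l * coeff4 p i j k l))))"
proof -
  have c: "coeff (coeff (coeff (coeff p i) j) k) l = 0"
    if "N \<le> i \<or> N \<le> j \<or> N \<le> k \<or> N \<le> l" for i j k l
    using assms that by (simp add: coeff4_def)
  have "coeff p i = 0" if "N \<le> i" for i
    using c that by (auto intro!: poly_eqI)
  moreover have "coeff (coeff p i) j = 0" if "N \<le> j" for i j
    using c that by (auto intro!: poly_eqI)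
  moreover have "coeff (coeff (coeff p i) j) k = 0" if "N \<le> k" for i j k
    using c that by (auto intro!: poly_eqI)
  moreover have "coeff (coeff (coeff (coeff p i) j) k) l = 0" if "N \<le> l" for i j k l
    using c that by auto
  ultimately show ?thesis
    by (simp add: eval4_def coeff4_def poly_eq_sum_lessThan[of N] poly_sum poly_const_pow sum_distrib_left mult_ac)
qed

lemma mpoly4_eq_0_if_reduced_vanishing:
  fixes p :: "'a::{finite,field} mpoly4"
  assumes reduced: "\<And>i j k l. CARD('a) \<le> i \<or> CARD('a) \<le> j \<or> CARD('a) \<le> k \<or> CARD('a) \<le> l
                      \<Longrightarrow> coeff4 p i j k l = 0"
    and vanish: "\<And>x y z w. eval4 p x y z w = 0"
  shows "p = 0"
proof (rule mpoly4_eqI)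
  fix i j k l
  show "coeff4 p i j k l = coeff4 0 i j k l"
  proof (cases "CARD('a) \<le> i \<or> CARD('a) \<le> j \<or> CARD('a) \<le> k \<or> CARD('a) \<le> l")
    case False
    have "(\<Sum>i<CARD('a). \<Sum>j<CARD('a). \<Sum>k<CARD('a). \<Sum>l<CARD('a).
             x ^ i * (y ^ j * (z ^ k * (w ^ l * coeff4 p i j k l)))) = 0" for x y z w
      using vanish[of x y z w] by (simp only: eval4_eq_sum_coeff4[OF reduced])
    then have "coeff4 p i j k l = 0"
      by (rule coeffs_eq_0_if_sum_powers4_vanish) (use False in auto)
    then show ?thesis by simp
  qed (simp add: reduced)
qed

lemma g_surf_eq_monom4:
  "g_surf q = monom4 (1 :: 'a::comm_ring_1) q 1 0 0 - monom4 1 1 q 0 0 + monom4 1 0 0 q 1 - monom4 1 0 0 1 q"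
  by (simp add: g_surf_def vars_eq_monom4 monom4_power monom4_mult)

lemma coeff4_g_surf:
  "coeff4 (g_surf q :: 'a::comm_ring_1 mpoly4) i j k l =
     (if (i, j, k, l) = (q, 1, 0, 0) then 1 else 0) - (if (i, j, k, l) = (1, q, 0, 0) then 1 else 0)
   + (if (i, j, k, l) = (0, 0, q, 1) then 1 else 0) - (if (i, j, k, l) = (0, 0, 1, q) then 1 else 0)"
  by (simp add: g_surf_eq_monom4 coeff4_add coeff4_diff coeff4_monom4)

lemma g_surf_ne_0: "q \<noteq> 1 \<Longrightarrow> (g_surf q :: 'a::comm_ring_1 mpoly4) \<noteq> 0"
  using coeff4_g_surf[of q q 1 0 0, where 'a='a] by auto

lemma homogeneous4_g_surf: "homogeneous4 (g_surf q :: 'a::comm_ring_1 mpoly4) (q + 1)"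
  by (auto simp: homogeneous4_def coeff4_g_surf split: if_splits)

lemma eval4_g_surf:
  "eval4 (g_surf q) x y z w = x ^ q * y - x * y ^ q + z ^ q * w - z * (w :: 'a::comm_ring_1) ^ q"
  by (simp add: g_surf_eq_monom4 eval4_add eval4_diff eval4_monom4)

lemma hyp_points_g_surf: "hyp_points (g_surf CARD('a) :: 'a::{finite,field} mpoly4) = proj_points"
  by (auto simp: hyp_points_def eval4_g_surf power_card_field)

lemma map4_g_surf:
  assumes "field_emb \<phi>"
  shows "map4 \<phi> (g_surf q) = g_surf q"
proof -
  have hom: "map4 \<phi> (p + r) = map4 \<phi> p + map4 \<phi> r" "map4 \<phi> (p - r) = map4 \<phi> p - map4 \<phi> r"
    for p r
    using assms by (simp_all add: map4_def map_poly_add_hom map_poly_diff_hom field_emb_0 field_emb_diff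
        field_emb_def)
  have "map4 \<phi> (monom4 1 i j k l) = monom4 1 i j k l" for i j k l
    using assms by (simp add: map4_def monom4_def map_poly_monom field_emb_0 field_emb_def)
  then show ?thesis
    by (simp add: g_surf_eq_monom4 hom)
qed

lemma partial_derivatives_g_surf:
  assumes "of_nat q = (0 :: 'a::idom)"
  shows "dX4 (g_surf q :: 'a mpoly4) = - monom4 1 0 q 0 0" "dY4 (g_surf q :: 'a mpoly4) = monom4 1 q 0 0 0"
    "dZ4 (g_surf q :: 'a mpoly4) = - monom4 1 0 0 0 q" "dW4 (g_surf q :: 'a mpoly4) = monom4 1 0 0 q 0"
  using assms by (simp_all add: g_surf_eq_monom4 partial_derivatives_add_diff partial_derivatives_monom4)

lemma nonsingular4_g_surf:
  assumes "of_nat q = (0 :: 'a::field)"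
  shows "nonsingular4 (g_surf q :: 'a mpoly4)"
  unfolding nonsingular4_def
proof clarify
  fix x y z w :: 'a
  assume "(x, y, z, w) \<in> hyp_points (g_surf q)"
    and "eval4 (dX4 (g_surf q)) x y z w = 0" "eval4 (dY4 (g_surf q)) x y z w = 0"
    "eval4 (dZ4 (g_surf q)) x y z w = 0" "eval4 (dW4 (g_surf q)) x y z w = 0"
  then show False
    using assms by (auto simp: partial_derivatives_g_surf eval4_uminus eval4_monom4 hyp_points_def proj_points_def)
qed

lemma irreducible_g_surf:
  assumes "2 \<le> q"
  shows "irreducible (g_surf q :: 'a::idom mpoly4)"
proof -
  let ?G = "g_surf q :: 'a mpoly4"
  define c :: "'a poly poly" where "c = monom (monom 1 1) q - monom (monom 1 q) 1"
  have cG: "coeff ?G n = (if n = q then monom 1 1 else 0) - (if n = 1 then monom 1 q else 0)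
      + (if n = 0 then [:c:] else 0)" for n
    using assms by (simp add: c_def g_surf_eq_monom4 monom4_def coeff_monom monom_0 one_pCons coeff_pCons
        split: nat.split)
  have "degree ?G = q"
    using assms cG by (intro antisym degree_le le_degree) auto
  then have "lead_coeff ?G = [:0, 1:]"
    using assms by (simp add: cG monom_Suc monom_0 one_pCons)
  moreover have "map_poly (\<lambda>a. coeff a 0) ?G = [:c:]"
    using assms by (intro poly_eqI) (simp add: coeff_map_poly cG coeff_pCons coeff_monom split: nat.split)
  moreover have "c \<noteq> 0"
  proof
    assume "c = 0"
    then have "coeff c q = 0" by simp
    with assms show False by (simp add: c_def coeff_monom)
  qed
  ultimately show ?thesis
    by (rule irreducible_if_lead_coeff_x)
qed

lemma eval4_eq_0_if_hyp_points_all: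
  fixes h :: "'a::comm_semiring_1 mpoly4"
  assumes "homogeneous4 h d" and "hyp_points h = proj_points"
  shows "eval4 h x y z w = 0"
proof -
  have on_proj: "eval4 h x y z w = 0" if "(x, y, z, w) \<noteq> (0, 0, 0, 0)" for x y z w
  proof -
    have "(x, y, z, w) \<in> hyp_points h"
      using assms(2) that by (simp add: proj_points_def)
    then show ?thesis by (simp add: hyp_points_def)
  qed
  have "coeff4 h 0 0 0 0 = 0"
  proof (cases "d = 0")
    case True
    then have "coeff4 h i j k l = 0" if "1 \<le> i \<or> 1 \<le> j \<or> 1 \<le> k \<or> 1 \<le> l" for i j k l
      using assms(1) that unfolding homogeneous4_def by (metis add_is_0 not_one_le_zero)
    from eval4_eq_sum_coeff4[where N = 1, OF this] show ?thesis
      using on_proj[of 1 0 0 0] by simp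
  qed (use assms(1) in \<open>auto simp: homogeneous4_def\<close>)
  then show ?thesis
    using on_proj by (cases "(x, y, z, w) = (0, 0, 0, 0)") (simp_all add: eval4_def coeff4_def poly_0_coeff_0)
qed

lemma homogeneous4_large_exponent_pure_power:
  assumes "homogeneous4 h d" and "d \<le> q" and "q \<le> i \<or> q \<le> j \<or> q \<le> k \<or> q \<le> l"
    and "coeff4 h i j k l \<noteq> 0"
  shows "(i, j, k, l) \<in> {(q, 0, 0, 0), (0, q, 0, 0), (0, 0, q, 0), (0, 0, 0, q)}"
proof -
  have "i + j + k + l \<le> q"
    using assms(1,2,4) unfolding homogeneous4_def by simp
  with assms(3) show ?thesis
    by (elim disjE) simp_all
qed

lemma homogeneous4_eq_0_if_vanishing:
  fixes h :: "'a::{finite,field} mpoly4"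
  assumes hom: "homogeneous4 h d" and "d \<le> CARD('a)"
    and vanish: "\<And>x y z w. eval4 h x y z w = 0"
  shows "h = 0"
proof -
  let ?q = "CARD('a)"
  have q: "2 \<le> ?q" by (rule card_field_ge_2)
  have homD: "i + j + k + l = d" if "coeff4 h i j k l \<noteq> 0" for i j k l
    using hom that unfolding homogeneous4_def by blast
  define cX cY cZ cW where "cX = coeff4 h ?q 0 0 0" and "cY = coeff4 h 0 ?q 0 0"
    and "cZ = coeff4 h 0 0 ?q 0" and "cW = coeff4 h 0 0 0 ?q"
  txt \<open>\<open>h + r\<close> is \<open>h\<close> with \<open>x\<^sup>q, \<dots>, w\<^sup>q\<close> replaced by \<open>x, \<dots>, w\<close>; \<open>r\<close> vanishes on \<open>\<FF>\<^sub>q\<^sup>4\<close>.\<close>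
  define r where "r = monom4 cX 1 0 0 0 - monom4 cX ?q 0 0 0 + monom4 cY 0 1 0 0 - monom4 cY 0 ?q 0 0
    + monom4 cZ 0 0 1 0 - monom4 cZ 0 0 ?q 0 + monom4 cW 0 0 0 1 - monom4 cW 0 0 0 ?q"
  have "h + r = 0"
  proof (rule mpoly4_eq_0_if_reduced_vanishing)
    show "eval4 (h + r) x y z w = 0" for x y z w
      by (simp add: r_def vanish eval4_add eval4_diff eval4_monom4 power_card_field)
    fix i j k l
    assume large: "?q \<le> i \<or> ?q \<le> j \<or> ?q \<le> k \<or> ?q \<le> l"
    let ?pure = "{(?q, 0, 0, 0), (0, ?q, 0, 0), (0, 0, ?q, 0), (0, 0, 0, ?q)}"
    have "coeff4 h i j k l = 0" if "(i, j, k, l) \<notin> ?pure"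
      using homogeneous4_large_exponent_pure_power[OF hom \<open>d \<le> ?q\<close> large] that by blast
    moreover have "coeff4 r i j k l = (if (i, j, k, l) \<in> ?pure then - coeff4 h i j k l else 0)"
      using large q
      by (elim disjE)
        (simp_all add: r_def cX_def cY_def cZ_def cW_def coeff4_add coeff4_diff coeff4_monom4 cong: if_cong)
    ultimately show "coeff4 (h + r) i j k l = 0"
      by (auto simp: coeff4_add)
  qed
  then have h_eq: "h = - r"
    by (simp add: eq_neg_iff_add_eq_0)
  have pure_power_coeff: "coeff4 h i j k l = 0"
    if "coeff4 h i j k l = - coeff4 h i' j' k' l'" "i + j + k + l = ?q" "i' + j' + k' + l' = 1"
    for i j k l i' j' k' l'
    using that homD[of i j k l] homD[of i' j' k' l'] q by fastforce
  have "coeff4 h 1 0 0 0 = - cX" "coeff4 h 0 1 0 0 = - cY" "coeff4 h 0 0 1 0 = - cZ" "coeff4 h 0 0 0 1 = - cW"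
    using q by (simp_all add: h_eq r_def coeff4_uminus coeff4_add coeff4_diff coeff4_monom4)
  then have "cX = 0" "cY = 0" "cZ = 0" "cW = 0"
    using pure_power_coeff[of ?q 0 0 0 1 0 0 0] pure_power_coeff[of 0 ?q 0 0 0 1 0 0]
      pure_power_coeff[of 0 0 ?q 0 0 0 1 0] pure_power_coeff[of 0 0 0 ?q 0 0 0 1]
    by (simp_all add: cX_def cY_def cZ_def cW_def)
  then show ?thesis
    using h_eq by (simp add: r_def)
qed

lemma card_field_less_degree_if_hyp_points_all:
  fixes h :: "'a::{finite,field} mpoly4"
  assumes "h \<noteq> 0" and "homogeneous4 h d" and "hyp_points h = proj_points"
  shows "CARD('a) < d"
proof (rule ccontr)
  assume "\<not> CARD('a) < d"
  then have "h = 0"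
    using eval4_eq_0_if_hyp_points_all[OF assms(2,3)]
    by (intro homogeneous4_eq_0_if_vanishing[OF assms(2)]) simp_all
  with assms(1) show False ..
qed

theorem lemma3p2:
  fixes q :: nat
  defines "q \<equiv> CARD('a)"
  shows "(\<forall>\<phi> :: 'a \<Rightarrow> 'b::alg_closed_field. field_emb \<phi> \<longrightarrow>
            nonsingular4 (map4 \<phi> (g_surf q :: ('a::{finite,field}) mpoly4)) \<and>
            irreducible (map4 \<phi> (g_surf q :: 'a mpoly4)))
       \<and> (g_surf q :: 'a mpoly4) \<noteq> 0 \<and> homogeneous4 (g_surf q :: 'a mpoly4) (q + 1)
       \<and> hyp_points (g_surf q :: 'a mpoly4) = proj_points
       \<and> (\<forall>(h :: 'a mpoly4) d. h \<noteq> 0 \<and> homogeneous4 h d \<and> hyp_points h = proj_points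
            \<longrightarrow> q + 1 \<le> d)"
proof (intro conjI allI impI)
  have q: "2 \<le> q"
    unfolding q_def by (rule card_field_ge_2)
  fix \<phi> :: "'a \<Rightarrow> 'b"
  assume \<phi>: "field_emb \<phi>"
  have "of_nat q = (0 :: 'b)"
    using field_emb_of_nat[OF \<phi>, of q] by (simp add: q_def of_nat_card_field field_emb_0[OF \<phi>])
  then show "nonsingular4 (map4 \<phi> (g_surf q :: 'a mpoly4))"
    by (simp add: map4_g_surf[OF \<phi>] nonsingular4_g_surf)
  show "irreducible (map4 \<phi> (g_surf q :: 'a mpoly4))"
    using q by (simp add: map4_g_surf[OF \<phi>] irreducible_g_surf)
next
  show "(g_surf q :: 'a mpoly4) \<noteq> 0"
    using card_field_ge_2[where 'a='a] by (simp add: q_def g_surf_ne_0)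
  show "homogeneous4 (g_surf q :: 'a mpoly4) (q + 1)"
    by (rule homogeneous4_g_surf)
  show "hyp_points (g_surf q :: 'a mpoly4) = proj_points"
    unfolding q_def by (rule hyp_points_g_surf)
next
  fix h :: "'a mpoly4" and d
  assume "h \<noteq> 0 \<and> homogeneous4 h d \<and> hyp_points h = proj_points"
  then show "q + 1 \<le> d"
    using card_field_less_degree_if_hyp_points_all[of h d] by (simp add: q_def)
qed

end
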